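(* Every well-graded $\cup$-closed family of finite sets is a partial learning space. The converse is false: there exists a partial learning space which is neither $\cup$-closed nor well-graded.
   Context: $d(K,L)=|K\triangle L|$ with $\triangle$ the symmetric difference. A family $\mathcal{K}$ is well-graded if for any two distinct $K,L\in\mathcal{K}$ there is a sequence $K_0=K,K_1,\dots,K_n=L$ in $\mathcal{K}$ with $n=d(K,L)$ and $d(K_i,K_{i+1})=1$. A family is $\cup$-closed if the union of any non-empty subfamily belongs to it. A partial knowledge structure is a family $\mathcal{F}$ of subsets of a set $Q$ with $Q=\bigcup\mathcal{F}\in\mathcal{F}$. A partial learning space is a partial knowledge structure $\mathcal{F}$ satisfying: [L1] for $K\subset L$ in $\mathcal{F}$ with $|L\setminus K|=n$ there is a chain $K=K_0\subset K_1\subset\dots\subset K_n=L$ with $K_{i+1}=K_i\cup\{q_i\}\in\mathcal{F}$, $q_i\notin K_i$; [L2] if $K\subset L$ are in $\mathcal{F}$ and $K\cup\{q\}\in\mathcal{F}$ with $q\notin K$, then $L\cup\{q\}\in\mathcal{F}$. (The family $\{\varnothing\}$ counts as well-graded, $\cup$-closed, and a partial learning space.) *)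

theory Defs
  imports Main
begin

definition setdist :: "'a set \<Rightarrow> 'a set \<Rightarrow> nat" where
  "setdist K L = card ((K - L) \<union> (L - K))"

definition well_graded :: "'a set set \<Rightarrow> bool" where
  "well_graded F \<longleftrightarrow>
     (\<forall>K\<in>F. \<forall>L\<in>F. K \<noteq> L \<longrightarrow>
        (\<exists>S :: nat \<Rightarrow> 'a set. S 0 = K \<and> S (setdist K L) = L \<and>
           (\<forall>i\<le>setdist K L. S i \<in> F) \<and>
           (\<forall>i<setdist K L. setdist (S i) (S (Suc i)) = 1)))"

definition union_closed :: "'a set set \<Rightarrow> bool" where
  "union_closed F \<longleftrightarrow> (\<forall>G. G \<subseteq> F \<and> G \<noteq> {} \<longrightarrow> \<Union>G \<in> F)"

definition partial_knowledge_structure :: "'a set set \<Rightarrow> bool" where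
  "partial_knowledge_structure F \<longleftrightarrow> \<Union>F \<in> F"

definition axiom_L1 :: "'a set set \<Rightarrow> bool" where
  "axiom_L1 F \<longleftrightarrow>
     (\<forall>K\<in>F. \<forall>L\<in>F. K \<subset> L \<longrightarrow>
        (\<exists>S :: nat \<Rightarrow> 'a set. S 0 = K \<and> S (card (L - K)) = L \<and>
           (\<forall>i<card (L - K). \<exists>q. q \<notin> S i \<and> S (Suc i) = insert q (S i)
                                  \<and> S (Suc i) \<in> F)))"

definition axiom_L2 :: "'a set set \<Rightarrow> bool" where
  "axiom_L2 F \<longleftrightarrow>
     (\<forall>K\<in>F. \<forall>L\<in>F. \<forall>q. K \<subset> L \<and> q \<notin> K \<and> insert q K \<in> F \<longrightarrow> insert q L \<in> F)"

definition partial_learning_space :: "'a set set \<Rightarrow> bool" where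
  "partial_learning_space F \<longleftrightarrow>
     partial_knowledge_structure F \<and> axiom_L1 F \<and> axiom_L2 F"

end

theory Submission
  imports Defs
begin

text \<open>For finite sets \<open>K \<subset> L\<close> in a well-graded family, a shortest path from \<open>K\<close> to \<open>L\<close>
  has \<open>|L - K|\<close> unit steps, so its first step \<open>T\<close> must be strictly closer to \<open>L\<close> than \<open>K\<close>;
  this forces \<open>T = K \<union> {q}\<close> with \<open>q \<in> L - K\<close>. Iterating this one-step extension gives
  axiom [L1], while [L2] and \<open>Q \<in> F\<close> are instances of \<open>\<union>\<close>-closure.
  For the converse, \<open>{{0},{1},{0,2},{1,2},{0,1,2}}\<close> is a partial learning space in
  which \<open>{0} \<union> {1}\<close> is missing, and \<open>{0}\<close>, \<open>{1}\<close> have no common neighbour.\<close>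

lemma setdist_triangle:
  assumes "finite A" "finite B" "finite C"
  shows "setdist A C \<le> setdist A B + setdist B C"
proof -
  have "setdist A C \<le> card (((A - B) \<union> (B - A)) \<union> ((B - C) \<union> (C - B)))"
    unfolding setdist_def using assms by (intro card_mono) auto
  also have "\<dots> \<le> setdist A B + setdist B C"
    unfolding setdist_def by (rule card_Un_le)
  finally show ?thesis .
qed

lemma setdist_subset: "K \<subseteq> L \<Longrightarrow> setdist K L = card (L - K)"
  unfolding setdist_def by (simp add: Diff_eq_empty_iff[THEN iffD2])

lemma setdist_eq_1_iff:
  "setdist K T = 1 \<longleftrightarrow> (\<exists>x. (x \<notin> K \<and> T = insert x K) \<or> (x \<in> K \<and> T = K - {x}))"
proof
  assume "setdist K T = 1"
  then obtain x where x: "(K - T) \<union> (T - K) = {x}"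
    unfolding setdist_def by (rule card_1_singletonE)
  then have "\<And>y. y \<in> T \<longleftrightarrow> (y \<in> K \<longleftrightarrow> y \<noteq> x)" by blast
  then show "\<exists>x. (x \<notin> K \<and> T = insert x K) \<or> (x \<in> K \<and> T = K - {x})" by blast
next
  assume "\<exists>x. (x \<notin> K \<and> T = insert x K) \<or> (x \<in> K \<and> T = K - {x})"
  then obtain x where "(K - T) \<union> (T - K) = {x}" by blast
  then show "setdist K T = 1" unfolding setdist_def by simp
qed

lemma setdist_unit_path_le:
  assumes fin: "\<And>i. i \<le> n \<Longrightarrow> finite (S i)"
    and unit: "\<And>i. i < n \<Longrightarrow> setdist (S i) (S (Suc i)) = 1"
    and "i \<le> n"
  shows "setdist (S i) (S n) \<le> n - i"
  using \<open>i \<le> n\<close>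
proof (induction "n - i" arbitrary: i)
  case 0
  then show ?case by (simp add: setdist_def)
next
  case (Suc m)
  then have "setdist (S i) (S n) \<le> setdist (S i) (S (Suc i)) + setdist (S (Suc i)) (S n)"
    by (intro setdist_triangle fin) auto
  also have "\<dots> \<le> 1 + (n - Suc i)"
    using Suc by (intro add_mono) (auto simp: unit)
  finally show ?case using Suc.hyps(2) by simp
qed

lemma well_graded_extension:
  assumes fin: "\<forall>K\<in>F. finite K" and wg: "well_graded F"
    and K: "K \<in> F" and L: "L \<in> F" and "K \<subset> L"
  shows "\<exists>q\<in>L - K. insert q K \<in> F"
proof -
  define n where "n = setdist K L"
  have n: "n = card (L - K)"
    unfolding n_def using \<open>K \<subset> L\<close> by (simp add: setdist_subset)
  have "finite L" using fin L by blast
  then have "n \<ge> 1" using n \<open>K \<subset> L\<close> by (simp add: Suc_le_eq card_gt_0_iff)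
  have "K \<noteq> L" using \<open>K \<subset> L\<close> by blast
  then obtain S where S: "S 0 = K" "S n = L" "\<forall>i\<le>n. S i \<in> F"
    "\<forall>i<n. setdist (S i) (S (Suc i)) = 1"
    using wg[unfolded well_graded_def, rule_format, OF K L] unfolding n_def by blast
  have T: "S 1 \<in> F" "setdist K (S 1) = 1"
    using S(1,3) S(4)[rule_format, of 0] \<open>n \<ge> 1\<close> by simp_all
  have "\<forall>i\<le>n. finite (S i)" using S(3) fin by blast
  then have closer: "setdist (S 1) L \<le> n - 1"
    using setdist_unit_path_le[of n S 1] S(2,4) \<open>n \<ge> 1\<close> by simp
  obtain x where x: "(x \<notin> K \<and> S 1 = insert x K) \<or> (x \<in> K \<and> S 1 = K - {x})"
    using T(2) unfolding setdist_eq_1_iff by blast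
  have "x \<in> L - K"
  proof (rule ccontr)
    assume "x \<notin> L - K"
    then have "(S 1 - L) \<union> (L - S 1) = insert x (L - K)"
      using x \<open>K \<subset> L\<close> by auto
    then have "setdist (S 1) L = Suc n"
      using \<open>finite L\<close> \<open>x \<notin> L - K\<close> n unfolding setdist_def by simp
    with closer show False by simp
  qed
  with x T(1) show ?thesis by auto
qed

lemma extension_chain:
  assumes fin: "\<forall>K\<in>F. finite K"
    and ext: "\<And>K L. K \<in> F \<Longrightarrow> L \<in> F \<Longrightarrow> K \<subset> L \<Longrightarrow> \<exists>q\<in>L - K. insert q K \<in> F"
    and "K \<in> F" "L \<in> F" "K \<subseteq> L" "card (L - K) = n"
  shows "\<exists>S. S 0 = K \<and> S n = L \<and>
           (\<forall>i<n. \<exists>q. q \<notin> S i \<and> S (Suc i) = insert q (S i) \<and> S (Suc i) \<in> F)"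
  using assms(3-)
proof (induction n arbitrary: K)
  case 0
  then have "K = L" using fin by (metis Diff_eq_empty_iff card_0_eq finite_Diff subset_antisym)
  then show ?case by (intro exI[of _ "\<lambda>_. K"]) simp
next
  case (Suc n)
  then have "K \<subset> L" by auto
  then obtain q where q: "q \<in> L - K" "insert q K \<in> F"
    using ext Suc.prems(1,2) by blast
  have "card (L - insert q K) = n"
    using q(1) Suc.prems fin by (simp add: Diff_insert2[symmetric] card_Diff_singleton)
  moreover have "insert q K \<subseteq> L" using q(1) Suc.prems(3) by blast
  ultimately obtain S where S: "S 0 = insert q K" "S n = L"
    "\<forall>i<n. \<exists>p. p \<notin> S i \<and> S (Suc i) = insert p (S i) \<and> S (Suc i) \<in> F"
    using Suc.IH[OF q(2) Suc.prems(2)] by blast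
  have "\<forall>i<Suc n. \<exists>p. p \<notin> case_nat K S i \<and> case_nat K S (Suc i) = insert p (case_nat K S i)
          \<and> case_nat K S (Suc i) \<in> F"
    using S q by (auto simp: less_Suc_eq_0_disj)
  then show ?case using S by (intro exI[of _ "case_nat K S"]) simp
qed

lemma axiom_L1_if_extension:
  assumes "\<forall>K\<in>F. finite K"
    and "\<And>K L. K \<in> F \<Longrightarrow> L \<in> F \<Longrightarrow> K \<subset> L \<Longrightarrow> \<exists>q\<in>L - K. insert q K \<in> F"
  shows "axiom_L1 F"
  unfolding axiom_L1_def using extension_chain[OF assms] by blast

lemma axiom_L2_if_union_closed:
  assumes "union_closed F"
  shows "axiom_L2 F"
  unfolding axiom_L2_def
proof (intro ballI allI impI)
  fix K L q assume "L \<in> F" and "K \<subset> L \<and> q \<notin> K \<and> insert q K \<in> F"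
  then have "{insert q K, L} \<subseteq> F" by simp
  then have "\<Union>{insert q K, L} \<in> F"
    using assms unfolding union_closed_def by blast
  moreover have "\<Union>{insert q K, L} = insert q L"
    using \<open>K \<subset> L \<and> q \<notin> K \<and> insert q K \<in> F\<close> by auto
  ultimately show "insert q L \<in> F" by simp
qed

lemma well_graded_union_closed_partial_learning_space:
  assumes "F \<noteq> {}" "\<forall>K\<in>F. finite K" "well_graded F" "union_closed F"
  shows "partial_learning_space F"
proof -
  have "\<Union>F \<in> F" using assms(1,4) unfolding union_closed_def by blast
  moreover have "axiom_L1 F"
    using assms(2) by (rule axiom_L1_if_extension[OF _ well_graded_extension[OF assms(2,3)]])
  moreover have "axiom_L2 F" using assms(4) by (rule axiom_L2_if_union_closed)
  ultimately show ?thesis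
    unfolding partial_learning_space_def partial_knowledge_structure_def by blast
qed

definition example_family :: "nat set set" where
  "example_family = {{0}, {1}, {0,2}, {1,2}, {0,1,2}}"

lemma mem_example_family_iff:
  "K \<in> example_family \<longleftrightarrow>
     K \<subseteq> {0,1,2} \<and> (0 \<in> K \<or> 1 \<in> K) \<and> (0 \<in> K \<and> 1 \<in> K \<longrightarrow> 2 \<in> K)"
proof
  assume "K \<in> example_family"
  then show "K \<subseteq> {0,1,2} \<and> (0 \<in> K \<or> 1 \<in> K) \<and> (0 \<in> K \<and> 1 \<in> K \<longrightarrow> 2 \<in> K)"
    by (auto simp: example_family_def)
next
  assume K: "K \<subseteq> {0,1,2} \<and> (0 \<in> K \<or> 1 \<in> K) \<and> (0 \<in> K \<and> 1 \<in> K \<longrightarrow> 2 \<in> K)"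
  then have "K = (if 0 \<in> K then {0} else {}) \<union> (if 1 \<in> K then {1} else {})
      \<union> (if 2 \<in> K then {2} else {})"
    by auto
  then show "K \<in> example_family"
    using K by (auto simp: example_family_def split: if_splits)
qed

lemma example_family_extension:
  assumes "K \<in> example_family" "L \<in> example_family" "K \<subset> L"
  shows "\<exists>q\<in>L - K. insert q K \<in> example_family"
proof (cases "2 \<in> L - K")
  case True
  then show ?thesis using assms(1) unfolding mem_example_family_iff by auto
next
  case False
  moreover obtain q where "q \<in> L - K" using assms(3) by blast
  ultimately have "insert q K \<in> example_family"
    using assms unfolding mem_example_family_iff by auto
  with \<open>q \<in> L - K\<close> show ?thesis by blast
qed

lemma axiom_L2_example_family: "axiom_L2 example_family"
  unfolding axiom_L2_def
proof (intro ballI allI impI)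
  fix K L q
  assume "K \<in> example_family" "L \<in> example_family"
    and "K \<subset> L \<and> q \<notin> K \<and> insert q K \<in> example_family"
  then show "insert q L \<in> example_family"
    unfolding mem_example_family_iff by auto
qed

lemma not_union_closed_example_family: "\<not> union_closed example_family"
proof
  assume "union_closed example_family"
  moreover have "{{0}, {1}} \<subseteq> example_family" by (simp add: example_family_def)
  ultimately have "\<Union>{{0}, {1}} \<in> example_family"
    unfolding union_closed_def by blast
  then show False by (simp add: mem_example_family_iff)
qed

lemma not_well_graded_example_family: "\<not> well_graded example_family"
proof
  assume "well_graded example_family"
  moreover have "{0} \<in> example_family" "{1} \<in> example_family" "{0::nat} \<noteq> {1}"
    by (simp_all add: example_family_def)
  moreover have "setdist {0::nat} {1} = 2" by (simp add: setdist_def)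
  ultimately obtain S where S: "S 0 = {0}" "S 2 = {1}" "\<forall>i\<le>2. S i \<in> example_family"
      "\<forall>i<2. setdist (S i) (S (Suc i)) = 1"
    unfolding well_graded_def by metis
  have "setdist {0} (S 1) = 1" "setdist (S 1) {1} = 1"
    using S(1,2) S(4)[rule_format, of 0] S(4)[rule_format, of 1] by (simp_all add: numeral_2_eq_2)
  moreover have "S 1 \<in> example_family" using S(3) by simp
  then have "S 1 \<in> {{0}, {1}, {0,2}, {1,2}, {0,1,2}}" by (simp add: example_family_def)
  ultimately show False
    by (elim insertE emptyE) (simp_all add: setdist_def)
qed

lemma partial_learning_space_example_family: "partial_learning_space example_family"
proof -
  have "\<Union>example_family = {0,1,2}" by (auto simp: example_family_def)
  then have "partial_knowledge_structure example_family"
    unfolding partial_knowledge_structure_def by (simp add: example_family_def)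
  moreover have "axiom_L1 example_family"
    by (rule axiom_L1_if_extension[OF _ example_family_extension]) (simp add: example_family_def)
  ultimately show ?thesis
    unfolding partial_learning_space_def using axiom_L2_example_family by blast
qed

theorem lemma5:
  shows "(\<forall>F :: 'a set set. F \<noteq> {} \<and> (\<forall>K\<in>F. finite K) \<and> well_graded F \<and> union_closed F
             \<longrightarrow> partial_learning_space F)
       \<and> (\<exists>F :: nat set set. finite F \<and> (\<forall>K\<in>F. finite K) \<and>
             partial_learning_space F \<and> \<not> union_closed F \<and> \<not> well_graded F)"
proof
  show "\<forall>F :: 'a set set. F \<noteq> {} \<and> (\<forall>K\<in>F. finite K) \<and> well_graded F \<and> union_closed F
          \<longrightarrow> partial_learning_space F"
    using well_graded_union_closed_partial_learning_space by blast
  have "finite example_family" "\<forall>K\<in>example_family. finite K"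
    by (simp_all add: example_family_def)
  then show "\<exists>F :: nat set set. finite F \<and> (\<forall>K\<in>F. finite K) \<and>
               partial_learning_space F \<and> \<not> union_closed F \<and> \<not> well_graded F"
    using partial_learning_space_example_family not_union_closed_example_family
      not_well_graded_example_family by blast
qed

end
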